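(* Let $\mathcal{D}$ be an abstract system of proof notations and $d\in\mathcal{D}$ with $o(d)\ge2$. Then for all $n\ge1$ and all $s\ge2$, $\vartheta_{\mathsf E^nd}(s)\le 2_{n-1}(2\cdot o(d))\cdot s$, where $\mathsf E^nd$ denotes $\mathsf E\cdots\mathsf Ed$ with $n$ occurrences of $\mathsf E$.
   Context: An abstract system of proof notations is a set $\mathcal{D}$ with functions $|\cdot|,o(\cdot)\colon\mathcal{D}\to\mathbb{N}\setminus\{0\}$ (size and height) and a relation $\to\subseteq\mathcal{D}\times\mathcal{D}$ such that $d\to d'$ implies $o(d')<o(d)$. The cut-elimination closure $\mathbb{E}(\mathcal{D})$ consists of formal terms inductively generated by: every $d\in\mathcal{D}$ (with size and height inherited); if $d,e\in\mathbb{E}(\mathcal{D})$ then $\mathsf{I}d,\ \mathsf{R}de,\ \mathsf{E}d\in\mathbb{E}(\mathcal{D})$ ($\mathsf I,\mathsf R,\mathsf E$ new symbols), with $|\mathsf Id|=|d|+1$, $|\mathsf Rde|=|d|+|e|+1$, $|\mathsf Ed|=|d|+1$, $o(\mathsf Id)=o(d)$, $o(\mathsf Rde)=o(d)+o(e)$, $o(\mathsf Ed)=2^{o(d)}-1$. The size function $\vartheta_d\colon\mathbb{N}\to\mathbb{N}$ for $d\in\mathbb{E}(\mathcal{D})$ is defined by recursion: $\vartheta_d(s)=s$ for $d\in\mathcal{D}$; $\vartheta_{\mathsf Id}(s)=\vartheta_d(s)+1$; $\vartheta_{\mathsf Rde}(s)=\max\{|d|+1+\vartheta_e(s),\ \vartheta_d(s)+1\}$;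 $\vartheta_{\mathsf Ed}(s)=o(d)\cdot(\vartheta_d(s)+2)$. Iterated exponentiation: $2_0(x)=x$, $2_{n+1}(x)=2^{2_n(x)}$. *)

theory Defs
  imports Main
begin

definition abstract_pn_system ::
  "'a set \<Rightarrow> ('a \<Rightarrow> nat) \<Rightarrow> ('a \<Rightarrow> nat) \<Rightarrow> ('a \<Rightarrow> 'a \<Rightarrow> bool) \<Rightarrow> bool" where
  "abstract_pn_system D sz ht red \<longleftrightarrow>
     (\<forall>d\<in>D. sz d \<ge> 1 \<and> ht d \<ge> 1) \<and>
     (\<forall>d e. red d e \<longrightarrow> d \<in> D \<and> e \<in> D \<and> ht e < ht d)"

text \<open>Formal terms of the cut-elimination closure E(D).\<close>
datatype 'a ecl = Base 'a | I "'a ecl" | R "'a ecl" "'a ecl" | E "'a ecl"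

inductive_set ECl :: "'a set \<Rightarrow> 'a ecl set" for D where
  "d \<in> D \<Longrightarrow> Base d \<in> ECl D"
| "d \<in> ECl D \<Longrightarrow> I d \<in> ECl D"
| "d \<in> ECl D \<Longrightarrow> e \<in> ECl D \<Longrightarrow> R d e \<in> ECl D"
| "d \<in> ECl D \<Longrightarrow> E d \<in> ECl D"

fun esize :: "('a \<Rightarrow> nat) \<Rightarrow> 'a ecl \<Rightarrow> nat" where
  "esize sz (Base d) = sz d"
| "esize sz (I d) = esize sz d + 1"
| "esize sz (R d e) = esize sz d + esize sz e + 1"
| "esize sz (E d) = esize sz d + 1"

fun eheight :: "('a \<Rightarrow> nat) \<Rightarrow> 'a ecl \<Rightarrow> nat" where
  "eheight ht (Base d) = ht d"
| "eheight ht (I d) = eheight ht d"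
| "eheight ht (R d e) = eheight ht d + eheight ht e"
| "eheight ht (E d) = 2 ^ eheight ht d - 1"

fun vartheta :: "('a \<Rightarrow> nat) \<Rightarrow> ('a \<Rightarrow> nat) \<Rightarrow> 'a ecl \<Rightarrow> nat \<Rightarrow> nat" where
  "vartheta sz ht (Base d) s = s"
| "vartheta sz ht (I d) s = vartheta sz ht d s + 1"
| "vartheta sz ht (R d e) s = max (esize sz d + 1 + vartheta sz ht e s) (vartheta sz ht d s + 1)"
| "vartheta sz ht (E d) s = eheight ht d * (vartheta sz ht d s + 2)"

fun tower :: "nat \<Rightarrow> nat \<Rightarrow> nat" where
  "tower 0 x = x"
| "tower (Suc n) x = 2 ^ tower n x"

end

theory Submission
  imports Defs
begin

text \<open>Write \<open>q = o(d)\<close> and \<open>x\<^sub>k = 2\<^sub>k(2q)\<close>. By induction on \<open>k\<close> one shows simultaneously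
  \<open>o(E\<^sup>k\<^sup>+\<^sup>1 d) \<cdot> (x\<^sub>k + 1) \<le> x\<^sub>k\<^sub>+\<^sub>1\<close> and \<open>\<vartheta>\<^bsub>E\<^sup>k\<^sup>+\<^sup>1 d\<^esub>(s) \<le> x\<^sub>k \<cdot> s\<close>. The height bound is
  what drives the size bound: for \<open>s \<ge> 2\<close>,
  \<open>\<vartheta>\<^bsub>E\<^sup>k\<^sup>+\<^sup>2 d\<^esub>(s) = o(E\<^sup>k\<^sup>+\<^sup>1 d) \<cdot> (\<vartheta>\<^bsub>E\<^sup>k\<^sup>+\<^sup>1 d\<^esub>(s) + 2) \<le> o(E\<^sup>k\<^sup>+\<^sup>1 d) \<cdot> (x\<^sub>k + 1) \<cdot> s \<le> x\<^sub>k\<^sub>+\<^sub>1 \<cdot> s\<close>.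
  The height bound itself propagates because \<open>2\<^sup>h\<close> is tiny compared with \<open>2\<^bsup>2\<^sup>x\<^esup>\<close> once
  \<open>h \<le> 2\<^sup>x / (x + 1)\<close>.\<close>

lemma two_mult_plus_two_le_two_power: "3 \<le> (x::nat) \<Longrightarrow> 2 * x + 2 \<le> 2 ^ x"
  by (induction x rule: dec_induct) auto

lemma tower_ge: "(4::nat) \<le> x \<Longrightarrow> 4 \<le> tower k x"
proof (induction k)
  case (Suc k)
  then have "2 * 4 + 2 \<le> (2::nat) ^ tower k x"
    using two_mult_plus_two_le_two_power[of "tower k x"] by simp
  then show ?case by simp
qed simp

lemma pred_two_power_mult_le_two_power_double:
  assumes "(q::nat) \<ge> 2"
  shows "(2 ^ q - 1) * (2 * q + 1) \<le> 2 ^ (2 * q)"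
proof (cases "q = 2")
  case False
  with assms have "2 * q + 1 \<le> 2 ^ q"
    using two_mult_plus_two_le_two_power[of q] by simp
  then have "(2 ^ q - 1) * (2 * q + 1) \<le> 2 ^ q * 2 ^ q"
    by (intro mult_mono) auto
  then show ?thesis by (simp add: mult_2 power_add)
qed simp

lemma pred_two_power_mult_le_two_power_two_power:
  assumes x: "(x::nat) \<ge> 3" and h: "h * (x + 1) \<le> 2 ^ x"
  shows "(2 ^ h - 1) * (2 ^ x + 1) \<le> (2::nat) ^ 2 ^ x"
proof -
  have "2 * h \<le> h * (x + 1)" using x by simp
  with h have "2 * h \<le> 2 ^ x" by linarith
  moreover have "2 * x + 2 \<le> 2 ^ x" using two_mult_plus_two_le_two_power x .
  ultimately have exponent: "h + (x + 1) \<le> 2 ^ x" by linarith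
  have "(2 ^ h - 1) * (2 ^ x + 1) \<le> (2::nat) ^ h * 2 ^ (x + 1)"
    by (intro mult_mono) auto
  also have "\<dots> = 2 ^ (h + (x + 1))" by (simp add: power_add)
  also have "\<dots> \<le> 2 ^ 2 ^ x" using exponent by (intro power_increasing) auto
  finally show ?thesis .
qed

lemma eheight_E_funpow_le:
  assumes "eheight ht t \<ge> 2"
  shows "eheight ht ((E ^^ Suc k) t) * (tower k (2 * eheight ht t) + 1)
           \<le> tower (Suc k) (2 * eheight ht t)"
proof (induction k)
  case 0
  show ?case using pred_two_power_mult_le_two_power_double[OF assms] by simp
next
  case (Suc k)
  have "tower k (2 * eheight ht t) \<ge> 4" using assms by (intro tower_ge) simp
  with Suc.IH show ?case
    using pred_two_power_mult_le_two_power_two_power[of "tower k (2 * eheight ht t)"] by simp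
qed

lemma vartheta_E_funpow_Base_le:
  assumes o: "ht d \<ge> 2" and s: "s \<ge> 2"
  shows "vartheta sz ht ((E ^^ Suc k) (Base d)) s \<le> tower k (2 * ht d) * s"
proof (induction k)
  case 0
  have "ht d * (s + 2) \<le> ht d * (2 * s)" using s by (intro mult_le_mono2) simp
  then show ?case by simp
next
  case (Suc k)
  define x where "x = tower k (2 * ht d)"
  define h where "h = eheight ht ((E ^^ Suc k) (Base d))"
  have height: "h * (x + 1) \<le> 2 ^ x"
    using eheight_E_funpow_le[of ht "Base d" k] o by (simp add: x_def h_def)
  have "vartheta sz ht ((E ^^ Suc (Suc k)) (Base d)) s
          = h * (vartheta sz ht ((E ^^ Suc k) (Base d)) s + 2)"
    by (simp add: h_def)
  also have "\<dots> \<le> h * (x * s + 2)" using Suc.IH by (simp add: x_def)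
  also have "\<dots> \<le> h * ((x + 1) * s)" using s by (intro mult_le_mono2) (simp add: algebra_simps)
  also have "\<dots> = h * (x + 1) * s" by (simp add: algebra_simps)
  also have "\<dots> \<le> 2 ^ x * s" using height by (rule mult_right_mono) simp
  finally show ?case by (simp add: x_def)
qed

theorem mainTheorem8:
  fixes D :: "'a set" and sz ht :: "'a \<Rightarrow> nat" and red :: "'a \<Rightarrow> 'a \<Rightarrow> bool"
    and d :: 'a and n s :: nat
  assumes "abstract_pn_system D sz ht red"
    and "d \<in> D" and "ht d \<ge> 2"
    and "n \<ge> 1" and "s \<ge> 2"
  shows "vartheta sz ht ((E ^^ n) (Base d)) s \<le> tower (n - 1) (2 * ht d) * s"
proof -
  obtain k where "n = Suc k" using \<open>n \<ge> 1\<close> by (cases n) auto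
  then show ?thesis using vartheta_E_funpow_Base_le[of ht d s sz k] assms(3,5) by simp
qed

end
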